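(* Let $n\in\mathbb{N}$, let $c=(c_{i,j})$ be an $n\times(n+1)$ matrix with entries in $\{0,1\}$, $\sigma_1,\ldots,\sigma_n>0$, $\gamma_1,\ldots,\gamma_{n+1}>0$, with $\sum_jc_{i,j}\gamma_j>0$ for each $i$. Let $\boldsymbol{\Lambda}=(\Lambda_1,\ldots,\Lambda_n)'$ have independent coordinates $\Lambda_i\sim Exp(1)$. Let $Y_1,\ldots,Y_{n+1}$ be mutually independent with $Y_j\sim Ga(\gamma_j,1)$, and let $\boldsymbol{\Xi}=(\Xi_1,\ldots,\Xi_n)'$ with $\Xi_i=\sum_{j=1}^{n+1}\frac{c_{i,j}}{\sigma_i}Y_j$; assume $\boldsymbol{\Lambda}$ and $\boldsymbol{\Xi}$ are independent. Then a random vector $\mathbf{X}=(X_1,\ldots,X_n)'$ has decumulative distribution function \[ \mathbf{P}[X_1>x_1,\ldots,X_n>x_n]=\prod_{j=1}^{n+1}\left(1+\sum_{i=1}^n\frac{c_{i,j}}{\sigma_i}x_i\right)^{-\gamma_j},\quad (x_1,\ldots,x_n)'\in(0,\infty)^n, \] if and only if $(X_1,\ldots,X_n)'$ is equal in distribution to $(\Lambda_1/\Xi_1,\ldots,\Lambda_n/\Xi_n)'$.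
   Context: $Exp(\lambda)$ is the exponential distribution with rate $\lambda$; $Ga(\gamma,1)$ is the gamma distribution with shape $\gamma$ and rate $1$. *)

theory Defs
  imports "HOL-Probability.Probability"
begin

definition gamma_density :: "real \<Rightarrow> real \<Rightarrow> real" where
  "gamma_density k x = (if x \<le> 0 then 0 else x powr (k - 1) * exp (- x) / Gamma k)"

definition vec_law :: "'a measure \<Rightarrow> nat \<Rightarrow> (nat \<Rightarrow> 'a \<Rightarrow> real) \<Rightarrow> (nat \<Rightarrow> real) measure" where
  "vec_law M n Z = distr M (PiM {..<n} (\<lambda>_. borel)) (\<lambda>\<omega>. \<lambda>i\<in>{..<n}. Z i \<omega>)"

end

theory Submission
  imports Defs
begin

text \<open>Conditionally on \<open>\<Xi>\<close>, the ratios \<open>\<Lambda>\<^sub>i / \<Xi>\<^sub>i\<close> are independent exponentials with rates \<open>\<Xi>\<^sub>i\<close>,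
so \<open>P[\<Lambda>\<^sub>i / \<Xi>\<^sub>i > x\<^sub>i for all i] = E exp (- \<Sum>\<^sub>i x\<^sub>i \<Xi>\<^sub>i)\<close>. Regrouping,
\<open>\<Sum>\<^sub>i x\<^sub>i \<Xi>\<^sub>i = \<Sum>\<^sub>j t\<^sub>j Y\<^sub>j\<close> with \<open>t\<^sub>j = \<Sum>\<^sub>i c\<^sub>i\<^sub>j x\<^sub>i / \<sigma>\<^sub>i\<close>, and independence of the \<open>Y\<^sub>j\<close>
together with the Laplace transform \<open>E exp (- t Y) = (1 + t) powr (- \<gamma>)\<close> of \<open>Ga(\<gamma>,1)\<close> yields the
product formula. Conversely, the orthants \<open>{y. x < y}\<close> form an \<open>\<inter>\<close>-stable generator of the Borel sets
of \<open>\<real>\<^sup>n\<close>; a law giving full mass to the open positive orthant is therefore determined by its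
values on the orthants with \<open>x > 0\<close>. Both laws in question live there: the survival function tends
to \<open>1\<close> at the origin, and \<open>\<Sum>\<^sub>j c\<^sub>i\<^sub>j \<gamma>\<^sub>j > 0\<close> forces \<open>\<Xi>\<^sub>i > 0\<close> almost surely.\<close>

section \<open>Laplace transform of the gamma distribution\<close>

lemma nn_integral_gamma_density:
  assumes "k > 0"
  shows "(\<integral>\<^sup>+y. ennreal (gamma_density k y) \<partial>lborel) = 1"
proof -
  have G: "Gamma k > 0" using assms by (simp add: Gamma_real_pos)
  have "gamma_density k y = indicator {0..} y * y powr (k - 1) / exp y * (1 / Gamma k)" for y
    by (cases "y > 0") (auto simp: gamma_density_def exp_minus field_simps indicator_def)
  then have "(\<integral>\<^sup>+y. ennreal (gamma_density k y) \<partial>lborel)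
      = (\<integral>\<^sup>+y. ennreal (indicator {0..} y * y powr (k - 1) / exp y) \<partial>lborel) * ennreal (1 / Gamma k)"
    by (subst nn_integral_multc[symmetric]) (auto simp: ennreal_mult'[symmetric] G)
  also have "\<dots> = 1"
    using G by (simp add: Gamma_conv_nn_integral_real[OF assms, symmetric] ennreal_mult'[symmetric])
  finally show ?thesis .
qed

lemma gamma_density_mult_exp:
  assumes "t > -1"
  shows "gamma_density k y * exp (- t * y)
    = (1 + t) powr (- k) * ((1 + t) * gamma_density k ((1 + t) * y))"
proof (cases "y > 0")
  case True
  define a where "a = 1 + t"
  have a: "a > 0" "a * y > 0" using True assms by (simp_all add: a_def)
  have "a powr (- k) * (a * gamma_density k (a * y))
      = (a powr (- k) * (a * a powr (k - 1))) * (y powr (k - 1) * exp (- y) * exp (- t * y) / Gamma k)"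
  proof -
    have "(a * y) powr (k - 1) = a powr (k - 1) * y powr (k - 1)"
      using a True by (simp add: powr_mult)
    moreover have "exp (- (a * y)) = exp (- y) * exp (- t * y)"
      by (simp add: a_def exp_add[symmetric] algebra_simps)
    ultimately show ?thesis
      using a by (simp add: gamma_density_def)
  qed
  also have "a powr (- k) * (a * a powr (k - 1)) = 1"
    using a by (simp add: powr_add[symmetric] powr_mult_base)
  finally show ?thesis
    using True by (simp add: gamma_density_def a_def exp_minus)
next
  case False
  then have "(1 + t) * y \<le> 0" using assms by (simp add: mult_nonneg_nonpos)
  with False show ?thesis by (simp add: gamma_density_def)
qed

lemma gamma_density_nonneg: "k > 0 \<Longrightarrow> gamma_density k y \<ge> 0"
  by (simp add: gamma_density_def Gamma_real_pos)

lemma borel_measurable_gamma_density[measurable]: "gamma_density k \<in> borel_measurable borel"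
  unfolding gamma_density_def[abs_def] by measurable

lemma nn_integral_gamma_density_exp:
  assumes "k > 0" "t > -1"
  shows "(\<integral>\<^sup>+y. ennreal (gamma_density k y * exp (- t * y)) \<partial>lborel) = ennreal ((1 + t) powr (- k))"
proof -
  have a: "1 + t > 0" using assms by simp
  have "(\<integral>\<^sup>+y. ennreal (gamma_density k y * exp (- t * y)) \<partial>lborel)
      = ennreal ((1 + t) powr (- k)) * (ennreal \<bar>1 + t\<bar> * (\<integral>\<^sup>+y. ennreal (gamma_density k (0 + (1 + t) * y)) \<partial>lborel))"
  proof -
    have "ennreal (gamma_density k y * exp (- t * y))
        = ennreal ((1 + t) powr (- k)) * (ennreal \<bar>1 + t\<bar> * ennreal (gamma_density k (0 + (1 + t) * y)))" for y
    proof -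
      have "gamma_density k y * exp (- t * y) = (1 + t) powr (- k) * (\<bar>1 + t\<bar> * gamma_density k (0 + (1 + t) * y))"
        using gamma_density_mult_exp[OF assms(2), of k y] a by simp
      then show ?thesis
        using a gamma_density_nonneg[OF assms(1)] by (simp add: ennreal_mult)
    qed
    then show ?thesis
      by (simp add: nn_integral_cmult)
  qed
  also have "ennreal \<bar>1 + t\<bar> * (\<integral>\<^sup>+y. ennreal (gamma_density k (0 + (1 + t) * y)) \<partial>lborel) = 1"
    using nn_integral_real_affine[of "\<lambda>y. ennreal (gamma_density k y)" "1 + t" 0] a
    by (simp add: nn_integral_gamma_density[OF assms(1)])
  finally show ?thesis by simp
qed

lemma (in prob_space) gamma_distributed_laplace:
  assumes "distributed M lborel Y (gamma_density k)" "k > 0" "t > -1"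
  shows "(\<integral>\<^sup>+\<omega>. ennreal (exp (- t * Y \<omega>)) \<partial>M) = ennreal ((1 + t) powr (- k))"
  using distributed_nn_integral[OF assms(1), of "\<lambda>y. ennreal (exp (- t * y))"]
    nn_integral_gamma_density_exp[OF assms(2,3)] assms(2)
  by (simp add: ennreal_mult'[symmetric] gamma_density_nonneg)

lemma (in prob_space) gamma_distributed_AE_pos:
  assumes "distributed M lborel Y (gamma_density k)"
  shows "AE \<omega> in M. Y \<omega> > 0"
proof -
  have "AE y in density lborel (\<lambda>y. ennreal (gamma_density k y)). y > 0"
    by (subst AE_density) (auto simp: gamma_density_def)
  then have "AE y in distr M lborel Y. y > 0"
    by (simp only: distributed_distr_eq_density[OF assms])
  then show ?thesis
    by (subst (asm) AE_distr_iff) (use distributed_measurable[OF assms] in auto)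
qed

lemma (in prob_space) indep_vars_gamma_laplace:
  assumes J: "finite J" and indep: "indep_vars (\<lambda>_. borel) Y J"
    and Y_gamma: "\<And>j. j \<in> J \<Longrightarrow> distributed M lborel (Y j) (gamma_density (\<gamma> j))"
    and \<gamma>: "\<And>j. j \<in> J \<Longrightarrow> \<gamma> j > 0" and t: "\<And>j. j \<in> J \<Longrightarrow> t j > -1"
  shows "(\<integral>\<^sup>+\<omega>. ennreal (exp (- (\<Sum>j\<in>J. t j * Y j \<omega>))) \<partial>M) = ennreal (\<Prod>j\<in>J. (1 + t j) powr (- \<gamma> j))"
proof -
  have "(\<integral>\<^sup>+\<omega>. ennreal (exp (- (\<Sum>j\<in>J. t j * Y j \<omega>))) \<partial>M)
      = (\<integral>\<^sup>+\<omega>. (\<Prod>j\<in>J. ennreal (exp (- t j * Y j \<omega>))) \<partial>M)"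
    by (simp add: prod_ennreal exp_sum[OF J, symmetric] sum_negf)
  also have "\<dots> = (\<Prod>j\<in>J. \<integral>\<^sup>+\<omega>. ennreal (exp (- t j * Y j \<omega>)) \<partial>M)"
    by (intro indep_vars_nn_integral J indep_vars_compose2[OF indep]) auto
  also have "\<dots> = (\<Prod>j\<in>J. ennreal ((1 + t j) powr (- \<gamma> j)))"
    by (intro prod.cong refl gamma_distributed_laplace Y_gamma \<gamma> t)
  finally show ?thesis
    by (simp add: prod_ennreal)
qed

section \<open>Orthants determine laws on \<open>\<real>\<^sup>I\<close>\<close>

definition orthant :: "'i set \<Rightarrow> ('i \<Rightarrow> real) \<Rightarrow> ('i \<Rightarrow> real) set" where
  "orthant I x = (\<Pi>\<^sub>E i\<in>I. {x i<..})"

lemma vimage_restrict_orthant: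
  "(\<lambda>\<omega>. \<lambda>i\<in>I. Z i \<omega>) -` orthant I x \<inter> space M = {\<omega> \<in> space M. \<forall>i\<in>I. x i < Z i \<omega>}"
  unfolding orthant_def by (auto simp: restrict_PiE_iff)

lemma orthant_in_sets_PiM: "finite I \<Longrightarrow> orthant I x \<in> sets (PiM I (\<lambda>_. borel))"
  unfolding orthant_def by (simp add: sets_PiM_I_finite)

lemma orthant_antimono: "(\<And>i. i \<in> I \<Longrightarrow> x i \<le> y i) \<Longrightarrow> orthant I y \<subseteq> orthant I x"
  unfolding orthant_def by (auto simp: PiE_iff intro: le_less_trans)

lemma orthant_Int: "orthant I x \<inter> orthant I y = orthant I (\<lambda>i. max (x i) (y i))"
  unfolding orthant_def by (auto simp: PiE_iff)

lemma incseq_orthant_shift: "incseq (\<lambda>m. orthant I (\<lambda>i. x i + inverse (real (Suc m))))"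
  by (intro incseq_SucI orthant_antimono) (simp add: le_imp_inverse_le)

lemma UN_orthant_shift:
  assumes "finite I"
  shows "(\<Union>m. orthant I (\<lambda>i. x i + inverse (real (Suc m)))) = orthant I x"
proof (intro equalityI subsetI)
  fix f assume f: "f \<in> orthant I x"
  obtain d where d: "d > 0" "\<And>i. i \<in> I \<Longrightarrow> d \<le> f i - x i"
  proof (cases "I = {}")
    case False
    show ?thesis
      using f False assms by (intro that[of "Min ((\<lambda>i. f i - x i) ` I)"]) (auto simp: orthant_def PiE_iff)
  qed (rule that[of 1]; simp)
  then obtain m where "inverse (real (Suc m)) < d"
    using reals_Archimedean by blast
  with f d have "f \<in> orthant I (\<lambda>i. x i + inverse (real (Suc m)))"
    by (force simp: orthant_def PiE_iff)
  then show "f \<in> (\<Union>m. orthant I (\<lambda>i. x i + inverse (real (Suc m))))" by blast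
next
  fix f assume "f \<in> (\<Union>m. orthant I (\<lambda>i. x i + inverse (real (Suc m))))"
  then obtain m where "f \<in> orthant I (\<lambda>i. x i + inverse (real (Suc m)))" by blast
  moreover have "orthant I (\<lambda>i. x i + inverse (real (Suc m))) \<subseteq> orthant I x"
    by (rule orthant_antimono) simp
  ultimately show "f \<in> orthant I x" by blast
qed

lemma tendsto_measure_orthant_shift:
  assumes "finite_measure P" "finite I" "sets P = sets (PiM I (\<lambda>_. borel))"
  shows "(\<lambda>m. measure P (orthant I (\<lambda>i. x i + inverse (real (Suc m))))) \<longlonglongrightarrow> measure P (orthant I x)"
proof -
  have "orthant I y \<in> sets P" for y
    using assms(2,3) by (simp add: orthant_in_sets_PiM)
  then have "range (\<lambda>m. orthant I (\<lambda>i. x i + inverse (real (Suc m)))) \<subseteq> sets P"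
    by blast
  from finite_measure.finite_Lim_measure_incseq[OF assms(1) this incseq_orthant_shift]
  show ?thesis
    by (simp only: UN_orthant_shift[OF assms(2)])
qed

lemma sets_PiM_borel_eq_sigma_orthants:
  assumes "finite I"
  shows "sets (PiM I (\<lambda>_. borel :: real measure)) = sigma_sets (\<Pi>\<^sub>E i\<in>I. UNIV) (range (orthant I))"
proof -
  let ?\<Omega> = "\<Pi>\<^sub>E i\<in>I. UNIV :: real set"
  let ?P = "{{f \<in> ?\<Omega>. \<forall>i\<in>J. f i \<in> A i} | A J. J \<in> {I} \<and> A \<in> Pi J (\<lambda>_. range greaterThan)}"
  have gen: "sets (PiM I (\<lambda>_. sigma UNIV (range greaterThan) :: real measure)) = sets (sigma ?\<Omega> ?P)"
  proof (rule sets_PiM_sigma)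
    show "\<exists>S\<subseteq>range greaterThan. countable S \<and> (UNIV :: real set) = \<Union>S"
    proof (intro exI[of _ "range (\<lambda>m::nat. {- real m<..})"] conjI)
      show "(UNIV :: real set) = (\<Union>m. {- real m<..})"
        using reals_Archimedean2 by (auto simp: minus_less_iff)
    qed auto
  qed (use assms in auto)
  have P_eq: "?P = range (orthant I)"
  proof (intro equalityI subsetI)
    fix X assume "X \<in> ?P"
    then obtain A where X: "X = {f \<in> ?\<Omega>. \<forall>i\<in>I. f i \<in> A i}" and "A \<in> Pi I (\<lambda>_. range greaterThan)"
      by blast
    then have "\<forall>i\<in>I. \<exists>a. A i = {a<..}" by auto
    then obtain a where "\<And>i. i \<in> I \<Longrightarrow> A i = {a i<..}"
      by metis
    then have "X = orthant I a"
      unfolding X by (auto simp: orthant_def PiE_iff extensional_def)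
    then show "X \<in> range (orthant I)" by blast
  next
    fix X assume "X \<in> range (orthant I)"
    then obtain x where "X = orthant I x" by blast
    then have "X = {f \<in> ?\<Omega>. \<forall>i\<in>I. f i \<in> {x i<..}}"
      by (auto simp: orthant_def PiE_iff extensional_def)
    then show "X \<in> ?P"
      by (intro CollectI exI[of _ "\<lambda>i. {x i<..}"] exI[of _ I]) auto
  qed
  have "sets (sigma ?\<Omega> (range (orthant I))) = sigma_sets ?\<Omega> (range (orthant I))"
    by (rule sets_measure_of) (auto simp: orthant_def)
  then show ?thesis
    unfolding borel_Ioi gen P_eq .
qed

lemma measure_eqI_orthants:
  assumes I: "finite I" and P: "finite_measure P" and Q: "finite_measure Q"
    and sets_P: "sets P = sets (PiM I (\<lambda>_. borel))" and sets_Q: "sets Q = sets (PiM I (\<lambda>_. borel))"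
    and eq: "\<And>x. measure P (orthant I x) = measure Q (orthant I x)"
  shows "P = Q"
proof (rule measure_eqI_generator_eq[where A="\<lambda>m. orthant I (\<lambda>_. - real m)"])
  show "Int_stable (range (orthant I))"
    by (auto intro!: Int_stableI simp: orthant_Int)
  show "range (orthant I) \<subseteq> Pow (\<Pi>\<^sub>E i\<in>I. UNIV)"
    by (auto simp: orthant_def)
  show "sets P = sigma_sets (\<Pi>\<^sub>E i\<in>I. UNIV) (range (orthant I))"
    and "sets Q = sigma_sets (\<Pi>\<^sub>E i\<in>I. UNIV) (range (orthant I))"
    using sets_P sets_Q sets_PiM_borel_eq_sigma_orthants[OF I] by simp_all
  show "emeasure P X = emeasure Q X" if "X \<in> range (orthant I)" for X
    using that eq by (auto simp: finite_measure.emeasure_eq_measure[OF P] finite_measure.emeasure_eq_measure[OF Q])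
  show "emeasure P (orthant I (\<lambda>_. - real m)) \<noteq> \<infinity>" for m
    by (simp add: finite_measure.emeasure_eq_measure[OF P])
  show "(\<Union>m. orthant I (\<lambda>_. - real m)) = (\<Pi>\<^sub>E i\<in>I. UNIV)"
  proof (intro equalityI subsetI)
    fix f :: "'a \<Rightarrow> real" assume f: "f \<in> (\<Pi>\<^sub>E i\<in>I. UNIV)"
    obtain m :: nat where m: "(\<Sum>i\<in>I. \<bar>f i\<bar>) < real m"
      using reals_Archimedean2 by blast
    have "\<bar>f i\<bar> \<le> (\<Sum>i\<in>I. \<bar>f i\<bar>)" if "i \<in> I" for i
      using I that by (intro member_le_sum) auto
    then have "f \<in> orthant I (\<lambda>_. - real m)"
      using f m by (force simp: orthant_def PiE_iff)
    then show "f \<in> (\<Union>m. orthant I (\<lambda>_. - real m))" by blast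
  qed (auto simp: orthant_def)
qed auto

lemma measure_orthant_eq_max_zero:
  assumes "finite I" "prob_space P" "sets P = sets (PiM I (\<lambda>_. borel))"
    and P1: "measure P (orthant I (\<lambda>_. 0)) = 1"
  shows "measure P (orthant I x) = measure P (orthant I (\<lambda>i. max (x i) 0))"
proof -
  interpret prob_space P by fact
  have "AE f in P. f \<in> orthant I (\<lambda>_. 0)"
    using P1 by (rule AE_prob_1)
  then have "AE f in P. f \<in> orthant I x \<longleftrightarrow> f \<in> orthant I (\<lambda>i. max (x i) 0)"
    by eventually_elim (auto simp: orthant_def PiE_iff)
  then show ?thesis
    using assms(1,3) by (intro measure_eq_AE) (auto simp: orthant_in_sets_PiM)
qed

lemma measure_positive_orthant_eq_1:
  assumes I: "finite I" and P: "prob_space P" and sets_P: "sets P = sets (PiM I (\<lambda>_. borel))"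
    and G: "\<And>x. (\<And>i. i \<in> I \<Longrightarrow> x i > 0) \<Longrightarrow> measure P (orthant I x) = G x"
    and G_lim: "(\<lambda>m. G (\<lambda>_. inverse (real (Suc m)))) \<longlonglongrightarrow> 1"
  shows "measure P (orthant I (\<lambda>_. 0)) = 1"
proof -
  have "(\<lambda>m. G (\<lambda>_. inverse (real (Suc m)))) \<longlonglongrightarrow> measure P (orthant I (\<lambda>_. 0))"
    using tendsto_measure_orthant_shift[OF prob_space.axioms(1)[OF P] I sets_P, of "\<lambda>_. 0"]
    by (simp add: G)
  with G_lim show ?thesis
    using LIMSEQ_unique by blast
qed

lemma measure_eqI_positive_orthants:
  assumes I: "finite I" and P: "prob_space P" and Q: "prob_space Q"
    and sets_P: "sets P = sets (PiM I (\<lambda>_. borel))" and sets_Q: "sets Q = sets (PiM I (\<lambda>_. borel))"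
    and P1: "measure P (orthant I (\<lambda>_. 0)) = 1" and Q1: "measure Q (orthant I (\<lambda>_. 0)) = 1"
    and eq: "\<And>x. (\<And>i. i \<in> I \<Longrightarrow> x i > 0) \<Longrightarrow> measure P (orthant I x) = measure Q (orthant I x)"
  shows "P = Q"
proof (rule measure_eqI_orthants[OF I _ _ sets_P sets_Q])
  show "finite_measure P" "finite_measure Q"
    using P Q by (simp_all add: prob_space_def)
  fix x :: "'a \<Rightarrow> real"
  let ?y = "\<lambda>i. max (x i) 0"
  have "(\<lambda>m. measure P (orthant I (\<lambda>i. ?y i + inverse (real (Suc m))))) \<longlonglongrightarrow> measure Q (orthant I ?y)"
    using tendsto_measure_orthant_shift[OF \<open>finite_measure Q\<close> I sets_Q, of ?y]
    by (simp add: eq add_nonneg_pos)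
  then have "measure P (orthant I ?y) = measure Q (orthant I ?y)"
    using tendsto_measure_orthant_shift[OF \<open>finite_measure P\<close> I sets_P, of ?y] LIMSEQ_unique by blast
  then show "measure P (orthant I x) = measure Q (orthant I x)"
    using measure_orthant_eq_max_zero[OF I P sets_P P1] measure_orthant_eq_max_zero[OF I Q sets_Q Q1] by simp
qed

section \<open>Exponentials divided by an independent positive vector\<close>

lemma (in prob_space) prob_exponential_orthant:
  assumes I: "finite I" and indep: "indep_vars (\<lambda>_. borel) \<Lambda> I"
    and \<Lambda>_exp: "\<And>i. i \<in> I \<Longrightarrow> distributed M lborel (\<Lambda> i) (exponential_density 1)"
    and a: "\<And>i. i \<in> I \<Longrightarrow> a i \<ge> 0"
  shows "prob {\<omega> \<in> space M. \<forall>i\<in>I. a i < \<Lambda> i \<omega>} = (\<Prod>i\<in>I. exp (- a i))"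
proof (cases "I = {}")
  case False
  have "indep_events (\<lambda>i. {\<omega> \<in> space M. a i < \<Lambda> i \<omega>}) I"
    by (rule indep_eventsI_indep_vars[OF indep]) simp
  then have "prob (\<Inter>i\<in>I. {\<omega> \<in> space M. a i < \<Lambda> i \<omega>}) = (\<Prod>i\<in>I. prob {\<omega> \<in> space M. a i < \<Lambda> i \<omega>})"
    using False I unfolding indep_events_def by blast
  moreover have "prob {\<omega> \<in> space M. a i < \<Lambda> i \<omega>} = exp (- a i)" if "i \<in> I" for i
    using exponential_distributedD_gt[OF \<Lambda>_exp a] that by simp
  moreover have "(\<Inter>i\<in>I. {\<omega> \<in> space M. a i < \<Lambda> i \<omega>}) = {\<omega> \<in> space M. \<forall>i\<in>I. a i < \<Lambda> i \<omega>}"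
    using False by auto
  ultimately show ?thesis by simp
qed (simp add: prob_space)

lemma (in prob_space) indep_var_emeasure_section:
  assumes indep: "indep_var S X T Y" and A: "A \<in> sets (S \<Otimes>\<^sub>M T)"
  shows "emeasure M ((\<lambda>\<omega>. (X \<omega>, Y \<omega>)) -` A \<inter> space M)
    = (\<integral>\<^sup>+y. emeasure (distr M S X) ((\<lambda>x. (x, y)) -` A) \<partial>distr M T Y)"
proof -
  have X: "random_variable S X" and Y: "random_variable T Y"
    using indep by (simp_all add: indep_var_distribution_eq)
  interpret XY: pair_prob_space "distr M S X" "distr M T Y"
    using prob_space_distr[OF X] prob_space_distr[OF Y]
    by (simp add: pair_prob_space_def pair_sigma_finite_def prob_space_imp_sigma_finite)
  have "emeasure M ((\<lambda>\<omega>. (X \<omega>, Y \<omega>)) -` A \<inter> space M) = emeasure (distr M (S \<Otimes>\<^sub>M T) (\<lambda>\<omega>. (X \<omega>, Y \<omega>))) A"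
    using X Y A by (simp add: emeasure_distr)
  also have "\<dots> = emeasure (distr M S X \<Otimes>\<^sub>M distr M T Y) A"
    using indep by (simp add: indep_var_distribution_eq)
  also have "\<dots> = (\<integral>\<^sup>+y. emeasure (distr M S X) ((\<lambda>x. (x, y)) -` A) \<partial>distr M T Y)"
    using A by (intro XY.emeasure_pair_measure_alt2) simp
  finally show ?thesis .
qed

lemma (in prob_space) emeasure_exponential_div_orthant:
  fixes \<Lambda> Z :: "'i \<Rightarrow> 'a \<Rightarrow> real"
  assumes I: "finite I" and \<Lambda>_indep: "indep_vars (\<lambda>_. borel) \<Lambda> I"
    and \<Lambda>_exp: "\<And>i. i \<in> I \<Longrightarrow> distributed M lborel (\<Lambda> i) (exponential_density 1)"
    and Z_rv: "\<And>i. i \<in> I \<Longrightarrow> Z i \<in> borel_measurable M"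
    and Z_pos: "AE \<omega> in M. \<forall>i\<in>I. Z i \<omega> > 0"
    and indep: "indep_var (PiM I (\<lambda>_. borel)) (\<lambda>\<omega>. \<lambda>i\<in>I. \<Lambda> i \<omega>) (PiM I (\<lambda>_. borel)) (\<lambda>\<omega>. \<lambda>i\<in>I. Z i \<omega>)"
    and x: "\<And>i. i \<in> I \<Longrightarrow> x i \<ge> 0"
  shows "emeasure M {\<omega> \<in> space M. \<forall>i\<in>I. x i < \<Lambda> i \<omega> / Z i \<omega>}
    = (\<integral>\<^sup>+\<omega>. ennreal (exp (- (\<Sum>i\<in>I. x i * Z i \<omega>))) \<partial>M)"
proof -
  define PI where "PI = PiM I (\<lambda>_. borel :: real measure)"
  define L where "L \<omega> = (\<lambda>i\<in>I. \<Lambda> i \<omega>)" for \<omega>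
  define Zv where "Zv \<omega> = (\<lambda>i\<in>I. Z i \<omega>)" for \<omega>
  have "\<Lambda> i \<in> borel_measurable M" if "i \<in> I" for i
    using distributed_measurable[OF \<Lambda>_exp[OF that]] by simp
  then have Lm: "L \<in> measurable M PI" and Zm: "Zv \<in> measurable M PI"
    unfolding L_def Zv_def PI_def using Z_rv by (auto intro: measurable_restrict)
  define A where "A = {p \<in> space (PI \<Otimes>\<^sub>M PI). \<forall>i\<in>I. x i < fst p i / snd p i}"
  have A: "A \<in> sets (PI \<Otimes>\<^sub>M PI)"
    unfolding A_def PI_def using I by measurable
  have "{\<omega> \<in> space M. \<forall>i\<in>I. x i < \<Lambda> i \<omega> / Z i \<omega>} = (\<lambda>\<omega>. (L \<omega>, Zv \<omega>)) -` A \<inter> space M"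
    using measurable_space[OF Lm] measurable_space[OF Zm]
    by (auto simp: A_def L_def Zv_def space_pair_measure)
  moreover have "indep_var PI L PI Zv"
    using indep by (simp add: PI_def L_def[abs_def] Zv_def[abs_def])
  ultimately have "emeasure M {\<omega> \<in> space M. \<forall>i\<in>I. x i < \<Lambda> i \<omega> / Z i \<omega>}
      = (\<integral>\<^sup>+z. emeasure (distr M PI L) ((\<lambda>l. (l, z)) -` A) \<partial>distr M PI Zv)"
    using A by (simp add: indep_var_emeasure_section)
  also have "\<dots> = (\<integral>\<^sup>+z. ennreal (\<Prod>i\<in>I. exp (- (x i * z i))) \<partial>distr M PI Zv)"
  proof (rule nn_integral_cong_AE)
    have "AE z in distr M PI Zv. \<forall>i\<in>I. 0 < z i"
      using Z_pos I by (subst AE_distr_iff[OF Zm]) (auto simp: PI_def Zv_def)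
    then show "AE z in distr M PI Zv. emeasure (distr M PI L) ((\<lambda>l. (l, z)) -` A) = ennreal (\<Prod>i\<in>I. exp (- (x i * z i)))"
    proof (rule AE_mp[OF _ AE_I2], intro impI)
      fix z assume z: "z \<in> space (distr M PI Zv)" "\<forall>i\<in>I. 0 < z i"
      then have "(\<lambda>l. (l, z)) -` A = orthant I (\<lambda>i. x i * z i)"
        by (auto simp: A_def orthant_def PI_def space_pair_measure space_PiM pos_less_divide_eq)
      moreover have "prob {\<omega> \<in> space M. \<forall>i\<in>I. x i * z i < \<Lambda> i \<omega>} = (\<Prod>i\<in>I. exp (- (x i * z i)))"
        using x z by (intro prob_exponential_orthant I \<Lambda>_indep \<Lambda>_exp) (auto intro: mult_nonneg_nonneg less_imp_le)
      moreover have "L -` orthant I (\<lambda>i. x i * z i) \<inter> space M = {\<omega> \<in> space M. \<forall>i\<in>I. x i * z i < \<Lambda> i \<omega>}"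
        unfolding L_def by (rule vimage_restrict_orthant)
      moreover have "orthant I (\<lambda>i. x i * z i) \<in> sets PI"
        unfolding PI_def using I by (rule orthant_in_sets_PiM)
      ultimately show "emeasure (distr M PI L) ((\<lambda>l. (l, z)) -` A) = ennreal (\<Prod>i\<in>I. exp (- (x i * z i)))"
        by (simp add: emeasure_distr[OF Lm] emeasure_eq_measure)
    qed
  qed
  also have "\<dots> = (\<integral>\<^sup>+\<omega>. ennreal (\<Prod>i\<in>I. exp (- (x i * Z i \<omega>))) \<partial>M)"
    using I by (subst nn_integral_distr[OF Zm]) (auto simp: PI_def Zv_def)
  finally show ?thesis
    by (simp add: exp_sum[OF I, symmetric] sum_negf)
qed

lemma sum_mult_sum_swap:
  fixes a :: "'i \<Rightarrow> 'j \<Rightarrow> 'a::comm_semiring_0"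
  shows "(\<Sum>i\<in>I. x i * (\<Sum>j\<in>J. a i j * y j)) = (\<Sum>j\<in>J. (\<Sum>i\<in>I. a i j * x i) * y j)"
  by (simp add: sum_distrib_left sum_distrib_right sum.swap[of _ I] ac_simps)

lemma (in prob_space) gamma_nonneg_combination_AE_pos:
  assumes J: "finite J" and j: "j \<in> J" "a j > 0" and a: "\<And>j. j \<in> J \<Longrightarrow> a j \<ge> 0"
    and Y_gamma: "\<And>j. j \<in> J \<Longrightarrow> distributed M lborel (Y j) (gamma_density (\<gamma> j))"
  shows "AE \<omega> in M. (\<Sum>j\<in>J. a j * Y j \<omega>) > 0"
proof -
  have "AE \<omega> in M. \<forall>j\<in>J. Y j \<omega> > 0"
    using Y_gamma by (intro AE_finite_allI J gamma_distributed_AE_pos)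
  then show ?thesis
  proof eventually_elim
    case (elim \<omega>)
    show ?case
      by (rule sum_pos2[OF J j(1)]) (use j a elim in \<open>auto intro: mult_nonneg_nonneg less_imp_le\<close>)
  qed
qed

lemma prob_exponential_div_gamma_mixture:
  fixes c :: "nat \<Rightarrow> nat \<Rightarrow> real" and \<sigma> \<gamma> x :: "nat \<Rightarrow> real"
    and N :: "'b measure" and \<Lambda> Y \<Xi> :: "nat \<Rightarrow> 'b \<Rightarrow> real"
  assumes c01: "\<forall>i<n. \<forall>j<n+1. c i j \<in> {0, 1}"
    and \<sigma>_pos: "\<forall>i<n. \<sigma> i > 0"
    and \<gamma>_pos: "\<forall>j<n+1. \<gamma> j > 0"
    and c\<gamma>_pos: "\<forall>i<n. (\<Sum>j<n+1. c i j * \<gamma> j) > 0"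
    and N_prob: "prob_space N"
    and \<Lambda>_exp: "\<forall>i<n. distributed N lborel (\<Lambda> i) (exponential_density 1)"
    and \<Lambda>_indep: "prob_space.indep_vars N (\<lambda>_. borel) \<Lambda> {..<n}"
    and Y_gamma: "\<forall>j<n+1. distributed N lborel (Y j) (gamma_density (\<gamma> j))"
    and Y_indep: "prob_space.indep_vars N (\<lambda>_. borel) Y {..<n+1}"
    and \<Xi>_def: "\<forall>i<n. \<forall>\<omega>. \<Xi> i \<omega> = (\<Sum>j<n+1. c i j / \<sigma> i * Y j \<omega>)"
    and \<Lambda>\<Xi>_indep: "prob_space.indep_var N
        (PiM {..<n} (\<lambda>_. borel)) (\<lambda>\<omega>. \<lambda>i\<in>{..<n}. \<Lambda> i \<omega>)
        (PiM {..<n} (\<lambda>_. borel)) (\<lambda>\<omega>. \<lambda>i\<in>{..<n}. \<Xi> i \<omega>)"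
    and x_pos: "\<forall>i<n. x i > 0"
  shows "measure N {\<omega> \<in> space N. \<forall>i<n. x i < \<Lambda> i \<omega> / \<Xi> i \<omega>}
    = (\<Prod>j<n+1. (1 + (\<Sum>i<n. c i j / \<sigma> i * x i)) powr (- \<gamma> j))"
proof -
  interpret prob_space N by (rule N_prob)
  define t where "t j = (\<Sum>i<n. c i j / \<sigma> i * x i)" for j
  have c_nonneg: "c i j \<ge> 0" if "i < n" "j < n+1" for i j
    using c01 that by fastforce
  have \<Xi>_rv: "\<Xi> i \<in> borel_measurable N" if "i < n" for i
    using \<Xi>_def that distributed_measurable[OF Y_gamma[rule_format]] by (simp add: fun_eq_iff[symmetric])
  have \<Xi>_pos: "AE \<omega> in N. \<forall>i\<in>{..<n}. \<Xi> i \<omega> > 0"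
  proof (rule AE_finite_allI)
    fix i assume i: "i \<in> {..<n}"
    then obtain j where "j < n+1" "c i j = 1"
      using c01 c\<gamma>_pos sum.neutral[of "{..<n+1}" "\<lambda>j. c i j * \<gamma> j"] by fastforce
    then have "AE \<omega> in N. (\<Sum>j<n+1. c i j / \<sigma> i * Y j \<omega>) > 0"
      using i \<sigma>_pos c_nonneg Y_gamma by (intro gamma_nonneg_combination_AE_pos[of _ j]) auto
    then show "AE \<omega> in N. \<Xi> i \<omega> > 0"
      using i \<Xi>_def by simp
  qed simp
  have "emeasure N {\<omega> \<in> space N. \<forall>i\<in>{..<n}. x i < \<Lambda> i \<omega> / \<Xi> i \<omega>}
      = (\<integral>\<^sup>+\<omega>. ennreal (exp (- (\<Sum>i<n. x i * \<Xi> i \<omega>))) \<partial>N)"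
    using \<Lambda>_exp \<Lambda>_indep \<Lambda>\<Xi>_indep x_pos \<Xi>_rv \<Xi>_pos
    by (intro emeasure_exponential_div_orthant) (auto simp: less_imp_le)
  also have "\<dots> = (\<integral>\<^sup>+\<omega>. ennreal (exp (- (\<Sum>j<n+1. t j * Y j \<omega>))) \<partial>N)"
  proof -
    have "(\<Sum>i<n. x i * \<Xi> i \<omega>) = (\<Sum>i<n. x i * (\<Sum>j<n+1. c i j / \<sigma> i * Y j \<omega>))" for \<omega>
      using \<Xi>_def by (intro sum.cong) simp_all
    then show ?thesis
      by (simp only: t_def sum_mult_sum_swap)
  qed
  also have "\<dots> = ennreal (\<Prod>j<n+1. (1 + t j) powr (- \<gamma> j))"
  proof (rule indep_vars_gamma_laplace)
    show "t j > -1" if "j \<in> {..<n+1}" for j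
    proof -
      have "0 \<le> c i j / \<sigma> i * x i" if "i < n" for i
        using c_nonneg[of i j] \<sigma>_pos x_pos \<open>j \<in> {..<n+1}\<close> that by (simp add: less_imp_le)
      then show ?thesis
        unfolding t_def by (intro less_le_trans[OF _ sum_nonneg]) auto
    qed
  qed (use Y_indep Y_gamma \<gamma>_pos in auto)
  finally show ?thesis
    by (simp add: emeasure_eq_measure t_def prod_nonneg Ball_def)
qed

section \<open>Laws of random vectors\<close>

lemma prob_space_vec_law:
  "prob_space M \<Longrightarrow> (\<And>i. i < n \<Longrightarrow> Z i \<in> borel_measurable M) \<Longrightarrow> prob_space (vec_law M n Z)"
  unfolding vec_law_def by (intro prob_space.prob_space_distr measurable_restrict) auto

lemma sets_vec_law: "sets (vec_law M n Z) = sets (PiM {..<n} (\<lambda>_. borel))"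
  by (simp add: vec_law_def)

lemma measure_vec_law_orthant:
  assumes "\<And>i. i < n \<Longrightarrow> Z i \<in> borel_measurable M"
  shows "measure (vec_law M n Z) (orthant {..<n} x) = measure M {\<omega> \<in> space M. \<forall>i<n. x i < Z i \<omega>}"
proof -
  have "(\<lambda>\<omega>. \<lambda>i\<in>{..<n}. Z i \<omega>) \<in> measurable M (PiM {..<n} (\<lambda>_. borel))"
    using assms by (intro measurable_restrict) auto
  then show ?thesis
    unfolding vec_law_def by (simp add: measure_distr orthant_in_sets_PiM vimage_restrict_orthant Ball_def)
qed

lemma vec_law_eq_iff_orthant_survival:
  assumes M: "prob_space M" and N: "prob_space N"
    and X_rv: "\<And>i. i < n \<Longrightarrow> X i \<in> borel_measurable M"
    and Z_rv: "\<And>i. i < n \<Longrightarrow> Z i \<in> borel_measurable N"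
    and Z_surv: "\<And>x. (\<And>i. i < n \<Longrightarrow> x i > 0) \<Longrightarrow> measure N {\<omega> \<in> space N. \<forall>i<n. x i < Z i \<omega>} = G x"
    and G_lim: "(\<lambda>m. G (\<lambda>_. inverse (real (Suc m)))) \<longlonglongrightarrow> 1"
  shows "(\<forall>x. (\<forall>i<n. x i > 0) \<longrightarrow> measure M {\<omega> \<in> space M. \<forall>i<n. x i < X i \<omega>} = G x)
    \<longleftrightarrow> vec_law M n X = vec_law N n Z"
proof
  have PZ: "measure (vec_law N n Z) (orthant {..<n} x) = G x" if "\<And>i. i \<in> {..<n} \<Longrightarrow> x i > 0" for x
    using that by (simp add: measure_vec_law_orthant Z_rv Z_surv)
  assume "\<forall>x. (\<forall>i<n. x i > 0) \<longrightarrow> measure M {\<omega> \<in> space M. \<forall>i<n. x i < X i \<omega>} = G x"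
  then have PX: "measure (vec_law M n X) (orthant {..<n} x) = G x" if "\<And>i. i \<in> {..<n} \<Longrightarrow> x i > 0" for x
    using that by (simp add: measure_vec_law_orthant X_rv)
  note PX_prob = prob_space_vec_law[OF M X_rv] and PZ_prob = prob_space_vec_law[OF N Z_rv]
  show "vec_law M n X = vec_law N n Z"
  proof (rule measure_eqI_positive_orthants[OF _ PX_prob PZ_prob sets_vec_law sets_vec_law])
    show "measure (vec_law M n X) (orthant {..<n} (\<lambda>_. 0)) = 1"
      by (rule measure_positive_orthant_eq_1[OF _ PX_prob sets_vec_law PX G_lim]) simp_all
    show "measure (vec_law N n Z) (orthant {..<n} (\<lambda>_. 0)) = 1"
      by (rule measure_positive_orthant_eq_1[OF _ PZ_prob sets_vec_law PZ G_lim]) simp_all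
    show "measure (vec_law M n X) (orthant {..<n} x) = measure (vec_law N n Z) (orthant {..<n} x)"
      if "\<And>i. i \<in> {..<n} \<Longrightarrow> x i > 0" for x
      using PX[OF that] PZ[OF that] by simp
  qed simp
next
  assume "vec_law M n X = vec_law N n Z"
  then show "\<forall>x. (\<forall>i<n. x i > 0) \<longrightarrow> measure M {\<omega> \<in> space M. \<forall>i<n. x i < X i \<omega>} = G x"
    using measure_vec_law_orthant[of n X M] measure_vec_law_orthant[of n Z N] X_rv Z_rv Z_surv by auto
qed

theorem theorem2p2:
  fixes n :: nat
    and c :: "nat \<Rightarrow> nat \<Rightarrow> real"
    and \<sigma> :: "nat \<Rightarrow> real" and \<gamma> :: "nat \<Rightarrow> real"
    and M :: "'a measure" and X :: "nat \<Rightarrow> 'a \<Rightarrow> real"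
    and N :: "'b measure" and \<Lambda> :: "nat \<Rightarrow> 'b \<Rightarrow> real" and Y :: "nat \<Rightarrow> 'b \<Rightarrow> real"
    and \<Xi> :: "nat \<Rightarrow> 'b \<Rightarrow> real"
  assumes c01: "\<forall>i<n. \<forall>j<n+1. c i j \<in> {0, 1}"
    and \<sigma>_pos: "\<forall>i<n. \<sigma> i > 0"
    and \<gamma>_pos: "\<forall>j<n+1. \<gamma> j > 0"
    and c\<gamma>_pos: "\<forall>i<n. (\<Sum>j<n+1. c i j * \<gamma> j) > 0"
    and N_prob: "prob_space N"
    and \<Lambda>_exp: "\<forall>i<n. distributed N lborel (\<Lambda> i) (exponential_density 1)"
    and \<Lambda>_indep: "prob_space.indep_vars N (\<lambda>_. borel) \<Lambda> {..<n}"
    and Y_gamma: "\<forall>j<n+1. distributed N lborel (Y j) (gamma_density (\<gamma> j))"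
    and Y_indep: "prob_space.indep_vars N (\<lambda>_. borel) Y {..<n+1}"
    and \<Xi>_def: "\<forall>i<n. \<forall>\<omega>. \<Xi> i \<omega> = (\<Sum>j<n+1. c i j / \<sigma> i * Y j \<omega>)"
    and \<Lambda>\<Xi>_indep: "prob_space.indep_var N
        (PiM {..<n} (\<lambda>_. borel)) (\<lambda>\<omega>. \<lambda>i\<in>{..<n}. \<Lambda> i \<omega>)
        (PiM {..<n} (\<lambda>_. borel)) (\<lambda>\<omega>. \<lambda>i\<in>{..<n}. \<Xi> i \<omega>)"
    and M_prob: "prob_space M"
    and X_rv: "\<forall>i<n. X i \<in> borel_measurable M"
  shows "(\<forall>x :: nat \<Rightarrow> real. (\<forall>i<n. x i > 0) \<longrightarrow>
            measure M {\<omega> \<in> space M. \<forall>i<n. X i \<omega> > x i}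
              = (\<Prod>j<n+1. (1 + (\<Sum>i<n. c i j / \<sigma> i * x i)) powr (- \<gamma> j)))
         \<longleftrightarrow> vec_law M n X = vec_law N n (\<lambda>i \<omega>. \<Lambda> i \<omega> / \<Xi> i \<omega>)"
proof (rule vec_law_eq_iff_orthant_survival)
  show "(\<lambda>\<omega>. \<Lambda> i \<omega> / \<Xi> i \<omega>) \<in> borel_measurable N" if "i < n" for i
    using that \<Xi>_def distributed_measurable[OF \<Lambda>_exp[rule_format]] distributed_measurable[OF Y_gamma[rule_format]]
    by (simp add: fun_eq_iff[symmetric])
  show "measure N {\<omega> \<in> space N. \<forall>i<n. x i < \<Lambda> i \<omega> / \<Xi> i \<omega>}
      = (\<Prod>j<n+1. (1 + (\<Sum>i<n. c i j / \<sigma> i * x i)) powr (- \<gamma> j))"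
    if "\<And>i. i < n \<Longrightarrow> x i > 0" for x
    using that by (intro prob_exponential_div_gamma_mixture[OF assms(1-11)]) auto
  have "(\<lambda>m. \<Prod>j<n+1. (1 + (\<Sum>i<n. c i j / \<sigma> i * inverse (real (Suc m)))) powr (- \<gamma> j))
      \<longlonglongrightarrow> (\<Prod>j<n+1. (1 + (\<Sum>i<n. c i j / \<sigma> i * 0)) powr (- \<gamma> j))"
    using LIMSEQ_inverse_real_of_nat by (intro tendsto_intros) auto
  then show "(\<lambda>m. \<Prod>j<n+1. (1 + (\<Sum>i<n. c i j / \<sigma> i * inverse (real (Suc m)))) powr (- \<gamma> j)) \<longlonglongrightarrow> 1"
    by simp
qed (use M_prob N_prob X_rv in auto)

end
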